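(* Let $q$ be an odd prime power and $\mathcal{L}'$ as in the context. Then there is no plane $\pi$ of $\mathrm{PG}(3,q)$ with $\mathsf{Line}(\pi)\subseteq\mathcal{L}'$ or $\mathsf{Line}(\pi)\cap\mathcal{L}'=\emptyset$, and there is no point $P$ with $\mathsf{Star}(P)\subseteq\mathcal{L}'$ or $\mathsf{Star}(P)\cap\mathcal{L}'=\emptyset$.
   Context: $\mathrm{PG}(3,q)$ is the 3-dimensional projective space over $\mathbb{F}_q$. $\mathsf{Star}(P)$ is the set of lines through the point $P$, $\mathsf{Line}(\pi)$ the set of lines in the plane $\pi$. Bruen-Drudge construction: $q$ odd, $\mathcal{Q}$ an elliptic quadric of $\mathrm{PG}(3,q)$ with quadratic form $\mathsf{Q}$. For $P\in\mathcal{Q}$, $\tau_P$ is the tangent plane at $P$ and the tangent lines at $P$ are the $q+1$ lines through $P$ in $\tau_P$. Each point $P'\neq P$ on such a tangent line is off $\mathcal{Q}$, and whether $\mathsf{Q}(v)$ is a nonzero square in $\mathbb{F}_q$ for a vector $v$ representing $P'$ is independent of the choice of $P'\ne P$ on the line and of $v$. Let $\mathcal{T}_P^1$ be the set of tangent lines at $P$ whose points $P'\ne P$ have $\mathsf{Q}(P')$ a square, and $\mathcal{T}_P^2$ the remaining tangent lines at $P$. Put $\mathcal{T}^i=\bigcup_{P\in\mathcal{Q}}\mathcal{T}_P^i$ ($i=1,2$), and let $\mathcal{S}$ be the set of secant lines (meeting $\mathcal{Q}$ in 2 points). The Bruen-Drudge line class is $\mathcal{L}=\mathcal{S}\cup\mathcal{T}^1$.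 Fix $P_1\in\mathcal{Q}$ and define the switched class $\mathcal{L}':=\bigl(\mathcal{L}\cup(\mathsf{Line}(\tau_{P_1})\setminus\mathsf{Star}(P_1))\bigr)\setminus(\mathsf{Star}(P_1)\setminus\mathsf{Line}(\tau_{P_1}))$. *)

theory Defs
  imports "HOL-Analysis.Finite_Cartesian_Product" "HOL-Library.Numeral_Type"
begin

text \<open>PG(3,q) over a finite field 'a with q = CARD('a) elements. Vectors live in 'a^4.
 Points, lines, planes of PG(3,q) are the 1-, 2-, 3-dimensional subspaces of 'a^4
 (represented as sets of vectors); incidence is inclusion.\<close>

type_synonym 'a vec4 = "'a ^ 4"

definition span1 :: "'a::field vec4 \<Rightarrow> 'a vec4 set" where
  "span1 u = {c *s u | c. True}"

definition span2 :: "'a::field vec4 \<Rightarrow> 'a vec4 \<Rightarrow> 'a vec4 set" where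
  "span2 u v = {a *s u + b *s v | a b. True}"

definition span3 :: "'a::field vec4 \<Rightarrow> 'a vec4 \<Rightarrow> 'a vec4 \<Rightarrow> 'a vec4 set" where
  "span3 u v w = {a *s u + b *s v + c *s w | a b c. True}"

definition indep2 :: "'a::field vec4 \<Rightarrow> 'a vec4 \<Rightarrow> bool" where
  "indep2 u v \<longleftrightarrow> (\<forall>a b. a *s u + b *s v = 0 \<longrightarrow> a = 0 \<and> b = 0)"

definition indep3 :: "'a::field vec4 \<Rightarrow> 'a vec4 \<Rightarrow> 'a vec4 \<Rightarrow> bool" where
  "indep3 u v w \<longleftrightarrow> (\<forall>a b c. a *s u + b *s v + c *s w = 0 \<longrightarrow> a = 0 \<and> b = 0 \<and> c = 0)"

definition pg_point :: "'a::field vec4 set \<Rightarrow> bool" where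
  "pg_point P \<longleftrightarrow> (\<exists>u. u \<noteq> 0 \<and> P = span1 u)"

definition pg_line :: "'a::field vec4 set \<Rightarrow> bool" where
  "pg_line l \<longleftrightarrow> (\<exists>u v. indep2 u v \<and> l = span2 u v)"

definition pg_plane :: "'a::field vec4 set \<Rightarrow> bool" where
  "pg_plane \<pi> \<longleftrightarrow> (\<exists>u v w. indep3 u v w \<and> \<pi> = span3 u v w)"

definition Star :: "'a::field vec4 set \<Rightarrow> 'a vec4 set set" where
  "Star P = {l. pg_line l \<and> P \<subseteq> l}"

definition Line :: "'a::field vec4 set \<Rightarrow> 'a vec4 set set" where
  "Line \<pi> = {l. pg_line l \<and> l \<subseteq> \<pi>}"

definition quadratic_form :: "('a::field vec4 \<Rightarrow> 'a) \<Rightarrow> bool" where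
  "quadratic_form Q \<longleftrightarrow> (\<exists>c :: 4 \<Rightarrow> 4 \<Rightarrow> 'a. \<forall>v. Q v = (\<Sum>i\<in>UNIV. \<Sum>j\<in>UNIV. c i j * v$i * v$j))"

definition polar :: "('a::field vec4 \<Rightarrow> 'a) \<Rightarrow> 'a vec4 \<Rightarrow> 'a vec4 \<Rightarrow> 'a" where
  "polar Q u w = Q (u + w) - Q u - Q w"

definition nondegenerate :: "('a::field vec4 \<Rightarrow> 'a) \<Rightarrow> bool" where
  "nondegenerate Q \<longleftrightarrow> (\<forall>u. (\<forall>w. polar Q u w = 0) \<longrightarrow> u = 0)"

definition elliptic_form :: "('a::field vec4 \<Rightarrow> 'a) \<Rightarrow> bool" where
  "elliptic_form Q \<longleftrightarrow> quadratic_form Q \<and> nondegenerate Q \<and>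
     \<not> (\<exists>l. pg_line l \<and> (\<forall>v\<in>l. Q v = 0))"

definition quadric_points :: "('a::field vec4 \<Rightarrow> 'a) \<Rightarrow> 'a vec4 set set" where
  "quadric_points Q = {P. pg_point P \<and> (\<forall>v\<in>P. Q v = 0)}"

definition tangent_plane :: "('a::field vec4 \<Rightarrow> 'a) \<Rightarrow> 'a vec4 set \<Rightarrow> 'a vec4 set" where
  "tangent_plane Q P = {w. \<forall>v\<in>P. polar Q v w = 0}"

definition tangent_lines :: "('a::field vec4 \<Rightarrow> 'a) \<Rightarrow> 'a vec4 set \<Rightarrow> 'a vec4 set set" where
  "tangent_lines Q P = Star P \<inter> Line (tangent_plane Q P)"

definition nz_square :: "'a::field \<Rightarrow> bool" where
  "nz_square x \<longleftrightarrow> x \<noteq> 0 \<and> (\<exists>c. x = c * c)"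

definition T1_at :: "('a::field vec4 \<Rightarrow> 'a) \<Rightarrow> 'a vec4 set \<Rightarrow> 'a vec4 set set" where
  "T1_at Q P = {l \<in> tangent_lines Q P. \<forall>v\<in>l. v \<notin> P \<longrightarrow> nz_square (Q v)}"

definition T1 :: "('a::field vec4 \<Rightarrow> 'a) \<Rightarrow> 'a vec4 set set" where
  "T1 Q = (\<Union>P\<in>quadric_points Q. T1_at Q P)"

definition secants :: "('a::field vec4 \<Rightarrow> 'a) \<Rightarrow> 'a vec4 set set" where
  "secants Q = {l. pg_line l \<and> card {P \<in> quadric_points Q. P \<subseteq> l} = 2}"

definition bruen_drudge :: "('a::field vec4 \<Rightarrow> 'a) \<Rightarrow> 'a vec4 set set" where
  "bruen_drudge Q = secants Q \<union> T1 Q"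

definition switched_class :: "('a::field vec4 \<Rightarrow> 'a) \<Rightarrow> 'a vec4 set \<Rightarrow> 'a vec4 set set" where
  "switched_class Q P1 =
     (bruen_drudge Q \<union> (Line (tangent_plane Q P1) - Star P1)) - (Star P1 - Line (tangent_plane Q P1))"

end

theory Submission
  imports Defs "HOL-Analysis.Cartesian_Space"
begin

text \<open>
  Write \<open>P\<^sub>1 = \<langle>p\<rangle>\<close> and \<open>\<tau> = p\<^sup>\<perp>\<close>. Membership of a line in the switched class is decided by
  a few local criteria: a line through \<open>P\<^sub>1\<close> not in \<open>\<tau>\<close> is out, a line of \<open>\<tau>\<close> missing \<open>P\<^sub>1\<close>
  is in, and otherwise passants and tangents of the second kind are out while secants and
  tangents of the first kind are in. Since \<open>q\<close> is odd, \<open>2 \<noteq> 0\<close>,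
  non-squares exist, and every anisotropic binary form represents every nonzero value, so for
  each point and each plane one can write down explicitly a line of each type through or in
  it. The only counting needed is that fewer additive functionals than coordinates have a
  common nonzero zero, which follows by pigeonhole over the finite field.
\<close>

section \<open>Finite fields\<close>

lemma even_card_if_fixpoint_free_involution:
  assumes "finite A" "\<forall>x\<in>A. f x \<in> A \<and> f x \<noteq> x \<and> f (f x) = x"
  shows "even (card A)"
  using assms
proof (induct "card A" arbitrary: A rule: less_induct)
  case less
  show ?case
  proof (cases "A = {}")
    case False
    then obtain x where x: "x \<in> A" by blast
    let ?B = "A - {x, f x}"
    have fx: "f x \<in> A" "f x \<noteq> x" using less.prems x by auto
    have card_B: "card ?B = card A - 2" using less.prems(1) x fx by (simp add: card_Diff_subset)
    have "card {x, f x} \<le> card A" using less.prems(1) x fx by (intro card_mono) auto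
    then have card_A: "card A \<ge> 2" using fx by simp
    have "\<forall>y\<in>?B. f y \<in> ?B \<and> f y \<noteq> y \<and> f (f y) = y"
    proof
      fix y assume y: "y \<in> ?B"
      then have "f y \<noteq> x" "f y \<noteq> f x" using less.prems(2) x by (metis Diff_iff insertCI)+
      then show "f y \<in> ?B \<and> f y \<noteq> y \<and> f (f y) = y" using y less.prems(2) by auto
    qed
    moreover have "card ?B < card A" using card_B card_A by simp
    ultimately have "even (card ?B)" using less.hyps less.prems(1) by blast
    then show ?thesis using card_B card_A by (metis add_diff_cancel_left' dvd_add_left_iff dvd_refl le_Suc_ex)
  qed simp
qed

lemma two_neq_zero_if_odd_card:
  assumes "odd CARD('a::{finite,field})"
  shows "(2::'a) \<noteq> 0"
proof
  assume "(2::'a) = 0"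
  then have "\<forall>x::'a. x + 1 \<noteq> x \<and> (x + 1) + 1 = x"
    by (metis add.assoc add_cancel_left_right one_add_one zero_neq_one)
  then have "even CARD('a)"
    using even_card_if_fixpoint_free_involution[of "UNIV::'a set" "\<lambda>x. x + 1"] by simp
  then show False using assms by simp
qed

lemma card_UNIV_le_card_squares:
  "CARD('a::{finite,field}) + 1 \<le> 2 * card (range (\<lambda>x::'a. x * x))"
proof -
  let ?S = "range (\<lambda>x::'a. x * x)"
  have "0 \<in> ?S" by (metis mult_zero_left rangeI)
  have UNIV_eq: "(UNIV::'a set) = {0} \<union> (\<Union>s\<in>?S-{0}. {x. x * x = s})" by auto
  have fibre: "card {x::'a. x * x = s} \<le> 2" for s
  proof (cases "\<exists>x. x * x = s")
    case True
    then obtain x0 where x0: "x0 * x0 = s" by blast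
    have "{x::'a. x * x = s} \<subseteq> {x0, -x0}"
    proof
      fix y assume "y \<in> {x::'a. x * x = s}"
      then have "(y - x0) * (y + x0) = 0" using x0 by (simp add: algebra_simps)
      then show "y \<in> {x0, -x0}" by (auto simp: add_eq_0_iff)
    qed
    then have "card {x::'a. x * x = s} \<le> card {x0, -x0}" by (intro card_mono) auto
    also have "\<dots> \<le> 2" by (simp add: card_insert_le_m1)
    finally show ?thesis .
  qed simp
  have "CARD('a) \<le> card {0::'a} + card (\<Union>s\<in>?S-{0}. {x. x * x = s})"
    by (subst UNIV_eq) (rule card_Un_le)
  also have "card (\<Union>s\<in>?S-{0}. {x. x * x = s}) \<le> (\<Sum>s\<in>?S-{0}. card {x. x * x = s})"
    by (rule card_UN_le) simp
  also have "\<dots> \<le> (\<Sum>s\<in>?S-{0}. 2)" by (rule sum_mono) (rule fibre)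
  also have "\<dots> = 2 * (card ?S - 1)" using \<open>0 \<in> ?S\<close> by simp
  finally have "CARD('a) \<le> 1 + 2 * (card ?S - 1)" by simp
  moreover have "card ?S \<ge> 1" using \<open>0 \<in> ?S\<close> by (metis card_0_eq empty_iff finite less_one not_le)
  ultimately show ?thesis by linarith
qed

text \<open>The sets \<open>{\<alpha> x\<^sup>2}\<close> and \<open>{t - d y\<^sup>2}\<close> each have more than \<open>q/2\<close> elements, so they meet.\<close>

lemma diagonal_binary_form_surjective:
  fixes \<alpha> d t :: "'a::{finite,field}"
  assumes "\<alpha> \<noteq> 0" "d \<noteq> 0"
  shows "\<exists>x y. \<alpha> * (x * x) + d * (y * y) = t"
proof (rule ccontr)
  assume no_rep: "\<not> ?thesis"
  let ?S = "range (\<lambda>x::'a. x * x)"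
  let ?A = "(\<lambda>s. \<alpha> * s) ` ?S" and ?B = "(\<lambda>s. t - d * s) ` ?S"
  have "?A \<inter> ?B = {}"
  proof (rule ccontr)
    assume "?A \<inter> ?B \<noteq> {}"
    then obtain x y where "\<alpha> * (x * x) = t - d * (y * y)" by auto
    then have "\<alpha> * (x * x) + d * (y * y) = t" by (simp add: algebra_simps)
    then show False using no_rep by blast
  qed
  moreover have "card ?A = card ?S" "card ?B = card ?S"
    using assms by (auto intro!: card_image inj_onI)
  ultimately have "card (?A \<union> ?B) = 2 * card ?S" by (simp add: card_Un_disjoint)
  moreover have "card (?A \<union> ?B) \<le> CARD('a)" by (rule card_mono) auto
  ultimately show False using card_UNIV_le_card_squares[where 'a='a] by linarith
qed

definition nonsquare :: "'a::field \<Rightarrow> bool" where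
  "nonsquare n \<longleftrightarrow> (\<nexists>c. n = c * c)"

lemma nonsquare_nonzero: "nonsquare n \<Longrightarrow> n \<noteq> 0"
  unfolding nonsquare_def by auto

lemma nonsquare_not_nz_square: "nonsquare n \<Longrightarrow> \<not> nz_square n"
  unfolding nonsquare_def nz_square_def by auto

lemma exists_nonsquare:
  assumes "odd CARD('a::{finite,field})"
  shows "\<exists>n::'a. nonsquare n"
proof (rule ccontr)
  assume "\<not> ?thesis"
  then have "surj (\<lambda>x::'a. x * x)" unfolding nonsquare_def by (auto simp: surj_def)
  then have "inj (\<lambda>x::'a. x * x)" by (intro finite_UNIV_surj_inj) simp
  then have "(1::'a) = -1" by (rule injD) simp
  then have "(2::'a) = 0" by (metis add_eq_0_iff one_add_one)
  then show False using two_neq_zero_if_odd_card[OF assms] by simp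
qed

section \<open>Quadratic forms on \<open>F\<^sup>4\<close>\<close>

lemma polar_expansion:
  assumes "\<And>v. Q v = (\<Sum>i\<in>UNIV. \<Sum>j\<in>UNIV. c i j * v$i * v$j)"
  shows "polar Q u w = (\<Sum>i\<in>UNIV. \<Sum>j\<in>UNIV. c i j * (u$i * w$j + w$i * u$j))"
  unfolding polar_def assms by (simp add: sum_subtractf[symmetric] algebra_simps)

locale quadratic_form_space =
  fixes Q :: "'a::field vec4 \<Rightarrow> 'a"
  assumes quadratic: "quadratic_form Q"
begin

lemma Q_scale: "Q (a *s u) = a * a * Q u"
proof -
  obtain c where "\<And>v. Q v = (\<Sum>i\<in>UNIV. \<Sum>j\<in>UNIV. c i j * v$i * v$j)"
    using quadratic unfolding quadratic_form_def by blast
  then show ?thesis by (simp add: sum_distrib_left algebra_simps)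
qed

lemma Q_zero [simp]: "Q 0 = 0"
  using Q_scale[of 0 0] by simp

lemma polar_commute: "polar Q u w = polar Q w u"
  unfolding polar_def by (simp add: algebra_simps)

lemma polar_add_right: "polar Q u (v + w) = polar Q u v + polar Q u w"
proof -
  obtain c where c: "\<And>v. Q v = (\<Sum>i\<in>UNIV. \<Sum>j\<in>UNIV. c i j * v$i * v$j)"
    using quadratic unfolding quadratic_form_def by blast
  show ?thesis unfolding polar_expansion[OF c] by (simp add: sum.distrib[symmetric] algebra_simps)
qed

lemma polar_scale_right: "polar Q u (a *s v) = a * polar Q u v"
proof -
  obtain c where c: "\<And>v. Q v = (\<Sum>i\<in>UNIV. \<Sum>j\<in>UNIV. c i j * v$i * v$j)"
    using quadratic unfolding quadratic_form_def by blast
  show ?thesis unfolding polar_expansion[OF c] by (simp add: sum_distrib_left algebra_simps)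
qed

lemma polar_add_left: "polar Q (v + w) u = polar Q v u + polar Q w u"
  using polar_add_right polar_commute by metis

lemma polar_scale_left: "polar Q (a *s v) u = a * polar Q v u"
  using polar_scale_right polar_commute by metis

lemma polar_zero_right [simp]: "polar Q u 0 = 0"
  using polar_scale_right[of u 0 0] by simp

lemma polar_zero_left [simp]: "polar Q 0 u = 0"
  using polar_scale_left[of 0 0 u] by simp

lemma Q_add: "Q (u + w) = Q u + Q w + polar Q u w"
  unfolding polar_def by simp

lemma polar_self: "polar Q u u = 2 * Q u"
proof -
  have "u + u = 2 *s u" by (simp add: vec_eq_iff)
  then show ?thesis unfolding polar_def by (simp add: Q_scale)
qed

lemma Q_lincomb: "Q (a *s u + b *s w) = a * a * Q u + b * b * Q w + a * b * polar Q u w"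
  by (simp add: Q_add Q_scale polar_scale_left polar_scale_right algebra_simps)

lemma polar_lincomb_right: "polar Q z (a *s u + b *s w) = a * polar Q z u + b * polar Q z w"
  by (simp add: polar_add_right polar_scale_right)

lemma polar_lincomb_left: "polar Q (a *s u + b *s w) z = a * polar Q u z + b * polar Q w z"
  by (simp add: polar_add_left polar_scale_left)

lemma polar_diff_right: "polar Q u (v - w) = polar Q u v - polar Q u w"
  using polar_lincomb_right[of u 1 v "-1" w] by (simp add: vector_sneg_minus1[symmetric])

lemma polar_diff_left: "polar Q (v - w) u = polar Q v u - polar Q w u"
  using polar_diff_right polar_commute by metis

lemma Q_diff: "Q (u - w) = Q u + Q w - polar Q u w"
  using Q_lincomb[of 1 u "-1" w] by (simp add: vector_sneg_minus1[symmetric])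

lemmas quadratic_simps = Q_lincomb Q_scale Q_add Q_diff polar_commute polar_self
  polar_lincomb_left polar_lincomb_right polar_add_left polar_add_right
  polar_scale_left polar_scale_right polar_diff_left polar_diff_right

lemma additive_polar: "additive (polar Q z)"
  by unfold_locales (rule polar_add_right)

end

lemma span1_mem: "c *s u \<in> span1 u"
  unfolding span1_def by blast

lemma span1_self: "u \<in> span1 u"
  using span1_mem[of 1 u] by simp

lemma span2_mem: "a *s u + b *s v \<in> span2 u v"
  unfolding span2_def by blast

lemma span2E: "x \<in> span2 u v \<Longrightarrow> (\<And>a b. x = a *s u + b *s v \<Longrightarrow> thesis) \<Longrightarrow> thesis"
  unfolding span2_def by blast

lemma span2_left: "u \<in> span2 u v"
  using span2_mem[of 1 u 0 v] by simp

lemma span2_right: "v \<in> span2 u v"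
  using span2_mem[of 0 u 1 v] by simp

lemma span1_subset_span2_iff: "span1 u \<subseteq> span2 a b \<longleftrightarrow> u \<in> span2 a b"
proof
  assume "u \<in> span2 a b"
  then obtain x y where u: "u = x *s a + y *s b" by (rule span2E)
  show "span1 u \<subseteq> span2 a b"
  proof
    fix v assume "v \<in> span1 u"
    then obtain c where "v = c *s u" unfolding span1_def by blast
    then have "v = (c * x) *s a + (c * y) *s b" using u by (simp add: vector_add_ldistrib vector_smult_assoc)
    then show "v \<in> span2 a b" using span2_mem by metis
  qed
qed (use span1_self in blast)

lemma span1_scale: "c \<noteq> 0 \<Longrightarrow> span1 (c *s u) = span1 u"
proof
  assume c: "c \<noteq> 0"
  show "span1 u \<subseteq> span1 (c *s u)"
  proof
    fix v assume "v \<in> span1 u"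
    then obtain d where "v = d *s u" unfolding span1_def by blast
    then have "v = (d / c) *s (c *s u)" using c by (simp add: vector_smult_assoc)
    then show "v \<in> span1 (c *s u)" unfolding span1_def by blast
  qed
qed (auto simp: span1_def vector_smult_assoc)

lemma span1_eq_imp_proportional: "span1 u = span1 v \<Longrightarrow> \<exists>c. u = c *s v"
  using span1_self unfolding span1_def by blast

lemma pg_point_subsetE:
  assumes "pg_point P" "P \<subseteq> S"
  obtains z where "z \<in> S" "z \<noteq> 0" "P = span1 z"
  using assms unfolding pg_point_def by (metis span1_self subsetD)

lemma pg_line_span2: "indep2 u v \<Longrightarrow> pg_line (span2 u v)"
  unfolding pg_line_def by blast

lemma indep2_nonzero: "indep2 u v \<Longrightarrow> u \<noteq> 0 \<and> v \<noteq> 0"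
  unfolding indep2_def by (metis add.right_neutral add_0 vector_smult_lzero vector_smult_rzero zero_neq_one)

lemma indep2_commute: "indep2 u v \<Longrightarrow> indep2 v u"
  unfolding indep2_def by (metis add.commute)

lemma indep2_not_both_proportional: "indep2 x y \<Longrightarrow> x = c *s e \<Longrightarrow> y = d *s e \<Longrightarrow> False"
proof -
  assume xy: "indep2 x y" "x = c *s e" "y = d *s e"
  then have "c \<noteq> 0" using indep2_nonzero[OF xy(1)] by auto
  have "d *s x + (- c) *s y = 0" unfolding xy(2,3) by (simp add: vec_eq_iff algebra_simps)
  then have "- c = 0" using xy(1) unfolding indep2_def by blast
  then show False using \<open>c \<noteq> 0\<close> by simp
qed

lemma span2_in_Line: "indep2 a b \<Longrightarrow> span2 a b \<subseteq> S \<Longrightarrow> span2 a b \<in> Line S"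
  unfolding Line_def using pg_line_span2 by blast

lemma span2_in_Star: "indep2 a b \<Longrightarrow> x \<in> span2 a b \<Longrightarrow> span2 a b \<in> Star (span1 x)"
  unfolding Star_def using pg_line_span2 span1_subset_span2_iff by blast

lemma span3_generators: "u \<in> span3 u v w" "v \<in> span3 u v w" "w \<in> span3 u v w"
proof -
  have "u = 1 *s u + 0 *s v + 0 *s w" "v = 0 *s u + 1 *s v + 0 *s w" "w = 0 *s u + 0 *s v + 1 *s w"
    by simp_all
  then show "u \<in> span3 u v w" "v \<in> span3 u v w" "w \<in> span3 u v w" unfolding span3_def by blast+
qed

lemma indep3_imp_indep2: "indep3 u v w \<Longrightarrow> indep2 u v"
  unfolding indep3_def indep2_def by (metis add.right_neutral vector_smult_lzero)

definition lincomb_closed :: "'a::field vec4 set \<Rightarrow> bool" where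
  "lincomb_closed S \<longleftrightarrow> (\<forall>a b x y. x \<in> S \<longrightarrow> y \<in> S \<longrightarrow> a *s x + b *s y \<in> S)"

lemma lincomb_closed_span3: "lincomb_closed (span3 u v w)"
  unfolding lincomb_closed_def
proof (intro allI impI)
  fix a b x y assume "x \<in> span3 u v w" "y \<in> span3 u v w"
  then obtain a1 b1 c1 a2 b2 c2 where "x = a1 *s u + b1 *s v + c1 *s w" "y = a2 *s u + b2 *s v + c2 *s w"
    unfolding span3_def by blast
  then have "a *s x + b *s y = (a*a1 + b*a2) *s u + (a*b1 + b*b2) *s v + (a*c1 + b*c2) *s w"
    by (simp add: vec_eq_iff algebra_simps)
  then show "a *s x + b *s y \<in> span3 u v w" unfolding span3_def by blast
qed

lemma lincomb_closedD: "lincomb_closed S \<Longrightarrow> x \<in> S \<Longrightarrow> y \<in> S \<Longrightarrow> a *s x + b *s y \<in> S"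
  unfolding lincomb_closed_def by blast

lemma lincomb_closed_UNIV: "lincomb_closed UNIV"
  unfolding lincomb_closed_def by simp

lemma lincomb_closed_scale: "lincomb_closed S \<Longrightarrow> x \<in> S \<Longrightarrow> c *s x \<in> S"
  unfolding lincomb_closed_def by (metis add.right_neutral vector_smult_lzero)

lemma lincomb_closed_add: "lincomb_closed S \<Longrightarrow> x \<in> S \<Longrightarrow> y \<in> S \<Longrightarrow> x + y \<in> S"
  unfolding lincomb_closed_def by (metis vector_smult_lid)

lemma lincomb_closed_diff: "lincomb_closed S \<Longrightarrow> x \<in> S \<Longrightarrow> y \<in> S \<Longrightarrow> x - y \<in> S"
  unfolding lincomb_closed_def by (metis diff_conv_add_uminus vector_smult_lid vector_sneg_minus1)

lemma lincomb_closed_span2: "lincomb_closed S \<Longrightarrow> x \<in> S \<Longrightarrow> y \<in> S \<Longrightarrow> span2 x y \<subseteq> S"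
  unfolding lincomb_closed_def span2_def by blast

section \<open>Common zeros of additive functionals\<close>

lemma additive_kernel_nontrivial:
  fixes L :: "'c::{finite,ab_group_add} \<Rightarrow> 'd::{finite,ab_group_add}"
  assumes "additive L" "CARD('d) < CARD('c)"
  shows "\<exists>x. x \<noteq> 0 \<and> L x = 0"
proof -
  have "\<not> inj L"
  proof
    assume "inj L"
    then have "card (range L) = CARD('c)" by (simp add: card_image)
    moreover have "card (range L) \<le> CARD('d)" by (rule card_mono) auto
    ultimately show False using assms(2) by simp
  qed
  then obtain x y where "x \<noteq> y" "L x = L y" unfolding inj_def by blast
  then show ?thesis using additive.diff[OF assms(1), of x y] by (intro exI[of _ "x - y"]) simp
qed

lemma card_vec_less:
  assumes "CARD('m::finite) < CARD('n::finite)"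
  shows "CARD('a::{finite,field} ^ 'm) < CARD('a ^ 'n)"
proof -
  have "card {0::'a, 1} \<le> CARD('a)" by (intro card_mono) auto
  then show ?thesis using assms by (simp add: power_strict_increasing_iff)
qed

lemma additive_vec_component: "additive (\<lambda>v::'a::field ^ 'n. v $ i)"
  by unfold_locales simp

lemma common_zero_of_three_additive:
  fixes f g h :: "'a::{finite,field} ^ 'n::finite \<Rightarrow> 'a"
  assumes "additive f" "additive g" "additive h" "CARD('n) > 3"
  shows "\<exists>v. v \<noteq> 0 \<and> f v = 0 \<and> g v = 0 \<and> h v = 0"
proof -
  let ?L = "\<lambda>v. (\<chi> i::3. if i = 1 then f v else if i = 2 then g v else h v)"
  have "additive ?L" using assms(1-3) by unfold_locales (simp add: vec_eq_iff additive.add)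
  moreover have "CARD('a ^ 3) < CARD('a ^ 'n)" using card_vec_less[where 'm=3] assms(4) by simp
  ultimately obtain v where "v \<noteq> 0" "?L v = 0" using additive_kernel_nontrivial by blast
  moreover have "f v = ?L v $ 1" "g v = ?L v $ 2" "h v = ?L v $ 3" by simp_all
  ultimately show ?thesis by auto
qed

lemma common_zero_of_two_additive:
  fixes f g :: "'a::{finite,field} ^ 'n::finite \<Rightarrow> 'a"
  assumes "additive f" "additive g" "CARD('n) > 2"
  shows "\<exists>v. v \<noteq> 0 \<and> f v = 0 \<and> g v = 0"
proof -
  let ?L = "\<lambda>v. (\<chi> i::2. if i = 1 then f v else g v)"
  have "additive ?L" using assms(1-2) by unfold_locales (simp add: vec_eq_iff additive.add)
  moreover have "CARD('a ^ 2) < CARD('a ^ 'n)" using card_vec_less[where 'm=2] assms(3) by simp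
  ultimately obtain v where "v \<noteq> 0" "?L v = 0" using additive_kernel_nontrivial by blast
  moreover have "f v = ?L v $ 1" "g v = ?L v $ 2" by simp_all
  ultimately show ?thesis by auto
qed

text \<open>Independence is forced by also killing a coordinate on which the first zero does not vanish.\<close>

lemma independent_common_zeros_of_two_additive:
  fixes f g :: "'a::{finite,field} ^ 4 \<Rightarrow> 'a"
  assumes "additive f" "additive g"
  shows "\<exists>u v. indep2 u v \<and> f u = 0 \<and> g u = 0 \<and> f v = 0 \<and> g v = 0"
proof -
  obtain u where u: "u \<noteq> 0" "f u = 0" "g u = 0"
    using common_zero_of_three_additive[OF assms assms(2)] by auto
  then obtain i where i: "u $ i \<noteq> 0" by (metis vec_eq_iff zero_index)
  obtain v where v: "v \<noteq> 0" "f v = 0" "g v = 0" "v $ i = 0"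
    using common_zero_of_three_additive[OF assms additive_vec_component[of i]] by auto
  have "indep2 u v" unfolding indep2_def
  proof (intro allI impI)
    fix a b assume ab: "a *s u + b *s v = 0"
    then have "(a *s u + b *s v) $ i = 0" by simp
    then have "a = 0" using i v(4) by simp
    then show "a = 0 \<and> b = 0" using ab v(1) by simp
  qed
  then show ?thesis using u v by blast
qed

definition comb3 :: "'a::field vec4 \<Rightarrow> 'a vec4 \<Rightarrow> 'a vec4 \<Rightarrow> 'a ^ 3 \<Rightarrow> 'a vec4" where
  "comb3 u v w c = c$1 *s u + c$2 *s v + c$3 *s w"

lemma comb3_lincomb: "comb3 u v w (a *s x + b *s y) = a *s comb3 u v w x + b *s comb3 u v w y"
  unfolding comb3_def
  by (simp add: vector_sadd_rdistrib vector_add_ldistrib vector_smult_assoc algebra_simps)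

lemma comb3_in_span3: "comb3 u v w c \<in> span3 u v w"
  unfolding comb3_def span3_def by blast

lemma comb3_nonzero: "indep3 u v w \<Longrightarrow> c \<noteq> 0 \<Longrightarrow> comb3 u v w c \<noteq> 0"
  unfolding indep3_def comb3_def by (metis (no_types, lifting) exhaust_3 vec_eq_iff zero_index)

lemma comb3_add: "comb3 u v w (x + y) = comb3 u v w x + comb3 u v w y"
  unfolding comb3_def by (simp add: vector_sadd_rdistrib)

lemma additive_comp_comb3: "additive f \<Longrightarrow> additive (\<lambda>c. f (comb3 u v w c))"
  unfolding additive_def by (simp add: comb3_add)

lemma common_zero_of_two_additive_in_plane:
  fixes f g :: "'a::{finite,field} vec4 \<Rightarrow> 'a"
  assumes "indep3 u v w" "additive f" "additive g"
  shows "\<exists>x\<in>span3 u v w. x \<noteq> 0 \<and> f x = 0 \<and> g x = 0"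
proof -
  obtain c :: "'a^3" where "c \<noteq> 0" "f (comb3 u v w c) = 0" "g (comb3 u v w c) = 0"
    using common_zero_of_two_additive[OF additive_comp_comb3[of f u v w] additive_comp_comb3[of g u v w]] assms
    by auto
  then show ?thesis using comb3_in_span3 comb3_nonzero[OF assms(1)] by blast
qed

lemma independent_zeros_of_additive_in_plane:
  fixes f :: "'a::{finite,field} vec4 \<Rightarrow> 'a"
  assumes "indep3 u v w" "additive f"
  shows "\<exists>x y. x \<in> span3 u v w \<and> y \<in> span3 u v w \<and> indep2 x y \<and> f x = 0 \<and> f y = 0"
proof -
  let ?\<phi> = "comb3 u v w"
  have f\<phi>: "additive (\<lambda>c. f (?\<phi> c))" using additive_comp_comb3[of f u v w] assms(2) .
  obtain c :: "'a^3" where c: "c \<noteq> 0" "f (?\<phi> c) = 0"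
    using common_zero_of_two_additive[OF f\<phi> f\<phi>] by auto
  then obtain i where i: "c $ i \<noteq> 0" by (metis vec_eq_iff zero_index)
  obtain d :: "'a^3" where d: "d \<noteq> 0" "f (?\<phi> d) = 0" "d $ i = 0"
    using common_zero_of_two_additive[OF f\<phi> additive_vec_component[of i]] by auto
  have "indep2 (?\<phi> c) (?\<phi> d)" unfolding indep2_def
  proof (intro allI impI)
    fix a b assume ab: "a *s ?\<phi> c + b *s ?\<phi> d = 0"
    then have "?\<phi> (a *s c + b *s d) = 0" by (simp add: comb3_lincomb)
    then have "a *s c + b *s d = 0" using comb3_nonzero[OF assms(1)] by blast
    then have "(a *s c + b *s d) $ i = 0" by simp
    then have "a = 0" using i d(3) by simp
    then show "a = 0 \<and> b = 0" using ab comb3_nonzero[OF assms(1) d(1)] by simp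
  qed
  then show ?thesis using c d comb3_in_span3 by blast
qed


section \<open>The switched class of an elliptic quadric\<close>

locale switched_elliptic =
  fixes Q :: "'a::{finite,field} vec4 \<Rightarrow> 'a" and p :: "'a vec4"
  assumes odd_card: "odd CARD('a)" and elliptic: "elliptic_form Q"
    and p_nonzero: "p \<noteq> 0" and Q_p: "Q p = 0"
begin

sublocale quadratic_form_space Q
  using elliptic unfolding elliptic_form_def by unfold_locales simp

lemma polar_nondegenerate: "(\<And>w. polar Q u w = 0) \<Longrightarrow> u = 0"
  using elliptic unfolding elliptic_form_def nondegenerate_def by blast

lemma two_nonzero: "(2::'a) \<noteq> 0"
  using two_neq_zero_if_odd_card[OF odd_card] .

lemma four_nonzero: "(4::'a) \<noteq> 0"
  using two_nonzero mult_eq_0_iff[of "2::'a" 2] by simp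

lemma eight_nonzero: "(8::'a) \<noteq> 0"
  using two_nonzero four_nonzero mult_eq_0_iff[of "2::'a" 4] by simp

lemma polar_p_p: "polar Q p p = 0"
  using Q_p by (simp add: polar_self)

lemma no_singular_line:
  assumes "indep2 a b" "Q a = 0" "Q b = 0" "polar Q a b = 0"
  shows False
proof -
  have "\<forall>v\<in>span2 a b. Q v = 0"
    using assms by (auto elim!: span2E simp: quadratic_simps)
  then show False using elliptic assms(1) unfolding elliptic_form_def pg_line_def by blast
qed

lemma indep2_if_polar_separates:
  assumes "polar Q z x = 0" "polar Q z y \<noteq> 0" "x \<noteq> 0"
  shows "indep2 x y"
  unfolding indep2_def
proof (intro allI impI)
  fix a b assume ab: "a *s x + b *s y = 0"
  then have "polar Q z (a *s x + b *s y) = 0" by simp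
  then have "b = 0" using assms by (simp add: polar_lincomb_right)
  then show "a = 0 \<and> b = 0" using ab assms(3) by simp
qed

lemma singular_perp_singular_proportional:
  assumes "Q e = 0" "e \<noteq> 0" "Q w = 0" "polar Q e w = 0"
  shows "\<exists>k. w = k *s e"
proof (rule ccontr)
  assume not_prop: "\<nexists>k. w = k *s e"
  have "indep2 e w" unfolding indep2_def
  proof (intro allI impI)
    fix a b assume ab: "a *s e + b *s w = 0"
    show "a = 0 \<and> b = 0"
    proof (cases "b = 0")
      case False
      then have "w = (- a / b) *s e" using ab
        by (simp add: vec_eq_iff field_simps) (metis add_eq_0_iff mult.commute)
      then show ?thesis using not_prop by blast
    qed (use ab assms(2) in simp)
  qed
  then show False using no_singular_line assms by blast
qed

lemma exists_polar_nonzero: "e \<noteq> 0 \<Longrightarrow> \<exists>z. polar Q e z \<noteq> 0"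
  using polar_nondegenerate by blast

lemma hyperbolic_partner:
  assumes S: "lincomb_closed S" "e \<in> S" "z \<in> S" "f \<in> S"
    and "Q e = 0" "polar Q e z \<noteq> 0" "polar Q e f = 0" "Q f \<noteq> 0"
  shows "\<exists>g\<in>S. polar Q e g = 1 \<and> polar Q f g = 0 \<and> Q g = 0"
proof -
  define z1 where "z1 = (1 / polar Q e z) *s z"
  have z1: "polar Q e z1 = 1" "z1 \<in> S"
    using assms lincomb_closed_scale unfolding z1_def by (auto simp: polar_scale_right)
  define z2 where "z2 = z1 - (polar Q f z1 / (2 * Q f)) *s f"
  have z2: "polar Q e z2 = 1" "polar Q f z2 = 0" "z2 \<in> S"
    using z1 assms two_nonzero lincomb_closed_diff[OF S(1) z1(2) lincomb_closed_scale[OF S(1) S(4)]]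
    unfolding z2_def by (auto simp: quadratic_simps)
  define g where "g = z2 - Q z2 *s e"
  have "g \<in> S" unfolding g_def by (rule lincomb_closed_diff[OF S(1) z2(3) lincomb_closed_scale[OF S(1) S(2)]])
  moreover have "polar Q e g = 1" "polar Q f g = 0" "Q g = 0"
    using z2 assms unfolding g_def by (auto simp: quadratic_simps)
  ultimately show ?thesis by blast
qed

definition anisotropic :: "'a vec4 \<Rightarrow> 'a vec4 \<Rightarrow> bool" where
  "anisotropic u v \<longleftrightarrow> (\<forall>a b. Q (a *s u + b *s v) = 0 \<longrightarrow> a = 0 \<and> b = 0)"

text \<open>Complete the square: \<open>Q(x u + y v) = \<alpha> (x + \<beta> y / 2\<alpha>)\<^sup>2 + d y\<^sup>2\<close> with \<open>d \<noteq> 0\<close> by anisotropy.\<close>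

lemma anisotropic_represents:
  assumes "anisotropic u v" "t \<noteq> 0"
  shows "\<exists>x y. Q (x *s u + y *s v) = t"
proof -
  let ?\<alpha> = "Q u" and ?\<beta> = "polar Q u v" and ?\<gamma> = "Q v"
  have \<alpha>: "?\<alpha> \<noteq> 0"
    using assms(1) unfolding anisotropic_def by (metis add.right_neutral vector_smult_lid vector_smult_lzero zero_neq_one)
  have Q_uv: "Q (x *s u + y *s v) = ?\<alpha> * (x * x) + ?\<beta> * x * y + ?\<gamma> * (y * y)" for x y
    by (simp add: Q_lincomb algebra_simps)
  define d where "d = ?\<gamma> - ?\<beta> * ?\<beta> / (4 * ?\<alpha>)"
  have "d \<noteq> 0"
  proof
    assume "d = 0"
    have "Q ((- ?\<beta> / (2 * ?\<alpha>)) *s u + 1 *s v) = d"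
      unfolding Q_uv d_def using \<alpha> two_nonzero four_nonzero eight_nonzero by (simp add: field_simps)
    then show False using assms(1) \<open>d = 0\<close> unfolding anisotropic_def by (metis zero_neq_one)
  qed
  then obtain x y where xy: "?\<alpha> * (x * x) + d * (y * y) = t"
    using diagonal_binary_form_surjective[OF \<alpha>] by blast
  have "Q ((x - ?\<beta> * y / (2 * ?\<alpha>)) *s u + y *s v) = t"
    unfolding Q_uv xy[symmetric] d_def using \<alpha> two_nonzero four_nonzero eight_nonzero
    by (simp add: field_simps)
  then show ?thesis by blast
qed

lemma anisotropic_if_perp_p:
  assumes "indep2 u v" "polar Q p u = 0" "polar Q p v = 0"
    and not_p: "\<And>a b k. a *s u + b *s v = k *s p \<Longrightarrow> k = 0"
  shows "anisotropic u v"
  unfolding anisotropic_def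
proof (intro allI impI)
  fix a b assume "Q (a *s u + b *s v) = 0"
  moreover have "polar Q p (a *s u + b *s v) = 0" using assms by (simp add: polar_lincomb_right)
  ultimately obtain k where "a *s u + b *s v = k *s p"
    using singular_perp_singular_proportional[OF Q_p p_nonzero] by blast
  then have "a *s u + b *s v = 0" using not_p by (metis vector_smult_lzero)
  then show "a = 0 \<and> b = 0" using assms(1) unfolding indep2_def by blast
qed

lemma passant_if_nonsquare_ratio:
  assumes "polar Q x y = 0" "Q x \<noteq> 0" "Q y = - (n * Q x)" "nonsquare n"
  shows "\<forall>v\<in>span2 x y. Q v = 0 \<longrightarrow> v = 0"
proof (intro ballI impI)
  fix v assume "v \<in> span2 x y" "Q v = 0"
  then obtain a b where ab: "v = a *s x + b *s y" by (auto elim: span2E)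
  have "Q v = Q x * (a * a - n * (b * b))" using ab assms by (simp add: Q_lincomb algebra_simps)
  then have sq: "a * a = n * (b * b)" using \<open>Q v = 0\<close> assms(2) by simp
  have "b = 0"
  proof (rule ccontr)
    assume "b \<noteq> 0"
    then have "n = (a / b) * (a / b)" using sq by (simp add: field_simps)
    then show False using assms(4) unfolding nonsquare_def by blast
  qed
  then show "v = 0" using ab sq by simp
qed

lemma quadric_pointD: "P \<in> quadric_points Q \<Longrightarrow> pg_point P \<and> (\<forall>v\<in>P. Q v = 0)"
  unfolding quadric_points_def by simp

lemma span1_in_quadric: "Q w = 0 \<Longrightarrow> w \<noteq> 0 \<Longrightarrow> span1 w \<in> quadric_points Q"
  unfolding quadric_points_def pg_point_def span1_def by (auto simp: Q_scale)

lemma secant_if_spanned_by_singular: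
  assumes "pg_line l" "w1 \<in> l" "w2 \<in> l" "Q w1 = 0" "Q w2 = 0" "polar Q w1 w2 \<noteq> 0"
    and spanned: "\<forall>z\<in>l. \<exists>a b. z = a *s w1 + b *s w2"
  shows "l \<in> secants Q"
proof -
  obtain z1 z2 where l: "l = span2 z1 z2" using assms(1) unfolding pg_line_def by blast
  have w_nonzero: "w1 \<noteq> 0" "w2 \<noteq> 0" using assms(6) by auto
  have "{P \<in> quadric_points Q. P \<subseteq> l} = {span1 w1, span1 w2}"
  proof (intro equalityI subsetI)
    fix P assume "P \<in> {P \<in> quadric_points Q. P \<subseteq> l}"
    then have P: "P \<in> quadric_points Q" "P \<subseteq> l" by auto
    then obtain z where z: "z \<in> l" "z \<noteq> 0" "P = span1 z" using quadric_pointD pg_point_subsetE by metis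
    have "Q z = 0" using P z quadric_pointD span1_self by blast
    obtain a b where ab: "z = a *s w1 + b *s w2" using spanned z(1) by blast
    have "Q z = a * b * polar Q w1 w2" using ab assms(4,5) by (simp add: Q_lincomb)
    then have "a = 0 \<or> b = 0" using \<open>Q z = 0\<close> assms(6) by simp
    then show "P \<in> {span1 w1, span1 w2}" using z ab by (auto simp: span1_scale)
  next
    fix P assume "P \<in> {span1 w1, span1 w2}"
    moreover have "span1 w1 \<subseteq> l" "span1 w2 \<subseteq> l" using assms(2,3) l span1_subset_span2_iff by auto
    ultimately show "P \<in> {P \<in> quadric_points Q. P \<subseteq> l}"
      using span1_in_quadric assms(4,5) w_nonzero by auto
  qed
  moreover have "span1 w1 \<noteq> span1 w2"
  proof
    assume "span1 w1 = span1 w2"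
    then obtain c where "w1 = c *s w2" using span1_eq_imp_proportional by blast
    then show False using assms(5,6) by (simp add: polar_scale_left polar_self)
  qed
  ultimately show ?thesis unfolding secants_def using assms(1) by simp
qed

lemma secant_span2_singular:
  assumes "indep2 z1 z2" "Q z1 = 0" "Q z2 = 0" "polar Q z1 z2 \<noteq> 0"
  shows "span2 z1 z2 \<in> secants Q"
  by (rule secant_if_spanned_by_singular[OF pg_line_span2[OF assms(1)] span2_left span2_right assms(2-4)])
     (unfold span2_def, blast)

text \<open>The singular points are \<open>\<langle>z\<^sub>1 \<pm> z\<^sub>2\<rangle>\<close>.\<close>

lemma secant_span2_opposite:
  assumes "indep2 z1 z2" "Q z2 = - Q z1" "polar Q z1 z2 = 0" "Q z1 \<noteq> 0"
  shows "span2 z1 z2 \<in> secants Q"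
proof (rule secant_if_spanned_by_singular[OF pg_line_span2[OF assms(1)]])
  show "z1 + z2 \<in> span2 z1 z2" using span2_mem[of 1 z1 1 z2] by simp
  show "z1 - z2 \<in> span2 z1 z2" using span2_mem[of 1 z1 "-1" z2] by (simp add: vector_sneg_minus1[symmetric])
  show "Q (z1 + z2) = 0" "Q (z1 - z2) = 0" using assms by (simp_all add: quadratic_simps)
  have "polar Q (z1 + z2) (z1 - z2) = 4 * Q z1" using assms by (simp add: quadratic_simps)
  then show "polar Q (z1 + z2) (z1 - z2) \<noteq> 0" using assms(4) four_nonzero by simp
  show "\<forall>z\<in>span2 z1 z2. \<exists>a b. z = a *s (z1 + z2) + b *s (z1 - z2)"
  proof
    fix z assume "z \<in> span2 z1 z2"
    then obtain a b where "z = a *s z1 + b *s z2" by (rule span2E)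
    have "x1 *s (z1 + z2) + x2 *s (z1 - z2) = (x1 + x2) *s z1 + (x1 - x2) *s z2" for x1 x2
      by (simp add: vec_eq_iff algebra_simps)
    moreover have "(a + b) / 2 + (a - b) / 2 = a" "(a + b) / 2 - (a - b) / 2 = b"
      using two_nonzero four_nonzero by (simp_all add: field_simps)
    ultimately have "z = ((a + b) / 2) *s (z1 + z2) + ((a - b) / 2) *s (z1 - z2)"
      using \<open>z = a *s z1 + b *s z2\<close> by metis
    then show "\<exists>a b. z = a *s (z1 + z2) + b *s (z1 - z2)" by blast
  qed
qed

lemma tangent_not_secant:
  assumes "indep2 e w" "Q e = 0" "polar Q e w = 0" "Q w \<noteq> 0"
  shows "span2 e w \<notin> secants Q"
proof -
  have "{P \<in> quadric_points Q. P \<subseteq> span2 e w} \<subseteq> {span1 e}"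
  proof
    fix P assume "P \<in> {P \<in> quadric_points Q. P \<subseteq> span2 e w}"
    then have P: "P \<in> quadric_points Q" "P \<subseteq> span2 e w" by auto
    then obtain z where z: "z \<in> span2 e w" "z \<noteq> 0" "P = span1 z" using quadric_pointD pg_point_subsetE by metis
    from z(1) obtain a b where ab: "z = a *s e + b *s w" by (rule span2E)
    have "Q z = 0" using P z quadric_pointD span1_self by blast
    then have "b = 0" using ab assms by (simp add: Q_lincomb)
    then show "P \<in> {span1 e}" using z ab by (auto simp: span1_scale)
  qed
  then have "card {P \<in> quadric_points Q. P \<subseteq> span2 e w} \<le> 1"
    using card_mono[of "{span1 e}"] by fastforce
  then show ?thesis unfolding secants_def by simp
qed

definition tau :: "'a vec4 set" where
  "tau = {w. polar Q p w = 0}"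

definition switched :: "'a vec4 set set" where
  "switched = switched_class Q (span1 p)"

lemma tangent_plane_p: "tangent_plane Q (span1 p) = tau"
  unfolding tangent_plane_def tau_def span1_def by (auto simp: polar_scale_left)

lemma span1_subset_line_iff: "pg_line l \<Longrightarrow> span1 u \<subseteq> l \<longleftrightarrow> u \<in> l"
  unfolding pg_line_def using span1_subset_span2_iff by blast

lemma switched_iff:
  assumes "pg_line l"
  shows "l \<in> switched \<longleftrightarrow>
    (l \<in> secants Q \<or> l \<in> T1 Q \<or> (l \<subseteq> tau \<and> p \<notin> l)) \<and> \<not> (p \<in> l \<and> \<not> l \<subseteq> tau)"
  unfolding switched_def switched_class_def bruen_drudge_def
  using span1_subset_line_iff[OF assms] assms by (simp add: Line_def Star_def tangent_plane_p)

lemma span2_subset_tau_iff: "span2 a b \<subseteq> tau \<longleftrightarrow> polar Q p a = 0 \<and> polar Q p b = 0"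
proof
  show "span2 a b \<subseteq> tau \<Longrightarrow> polar Q p a = 0 \<and> polar Q p b = 0"
    using span2_left span2_right unfolding tau_def by blast
qed (auto elim!: span2E simp: tau_def polar_lincomb_right)

lemma not_subset_tau: "v \<in> l \<Longrightarrow> polar Q p v \<noteq> 0 \<Longrightarrow> \<not> l \<subseteq> tau"
  unfolding tau_def by blast

lemma removed_line_notin_switched:
  assumes "pg_line l" "p \<in> l" "v \<in> l" "polar Q p v \<noteq> 0"
  shows "l \<notin> switched"
  using switched_iff[OF assms(1)] not_subset_tau[OF assms(3,4)] assms(2) by blast

lemma notin_switched_if_not_secant_not_T1:
  assumes "pg_line l" "l \<notin> secants Q" "l \<notin> T1 Q" "p \<in> l \<or> \<not> l \<subseteq> tau"
  shows "l \<notin> switched"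
  using switched_iff[OF assms(1)] assms by blast

lemma passant_not_secant_not_T1:
  assumes "\<forall>v\<in>l. Q v = 0 \<longrightarrow> v = 0"
  shows "l \<notin> secants Q" "l \<notin> T1 Q"
proof -
  have no_point: "{P \<in> quadric_points Q. P \<subseteq> l} = {}"
    using assms quadric_pointD pg_point_subsetE span1_self by (metis (no_types, lifting) empty_Collect_eq)
  show "l \<notin> secants Q" unfolding secants_def by (simp add: no_point)
  show "l \<notin> T1 Q"
    using no_point unfolding T1_def T1_at_def tangent_lines_def Star_def by blast
qed

lemma not_T1_if_nonsquare_point:
  assumes "v \<in> l" "Q v \<noteq> 0" "\<not> nz_square (Q v)"
  shows "l \<notin> T1 Q"
proof
  assume "l \<in> T1 Q"
  then obtain P where P: "P \<in> quadric_points Q" "l \<in> T1_at Q P" unfolding T1_def by blast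
  then have "v \<notin> P" using quadric_pointD assms(2) by blast
  then show False using P assms unfolding T1_at_def by blast
qed

lemma passant_notin_switched:
  assumes "pg_line l" "\<forall>v\<in>l. Q v = 0 \<longrightarrow> v = 0" "\<not> l \<subseteq> tau"
  shows "l \<notin> switched"
  using notin_switched_if_not_secant_not_T1 passant_not_secant_not_T1 assms by blast

lemma nonsquare_tangent_notin_switched:
  assumes "indep2 e w" "Q e = 0" "polar Q e w = 0" "nonsquare (Q w)"
    and "p \<in> span2 e w \<or> \<not> span2 e w \<subseteq> tau"
  shows "span2 e w \<notin> switched"
  using notin_switched_if_not_secant_not_T1[OF pg_line_span2[OF assms(1)] tangent_not_secant
      not_T1_if_nonsquare_point[OF span2_right]] assms nonsquare_nonzero nonsquare_not_nz_square
  by blast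

lemma added_line_in_switched:
  assumes "indep2 a b" "polar Q p a = 0" "polar Q p b = 0" "p \<notin> span2 a b"
  shows "span2 a b \<in> switched"
  using switched_iff[OF pg_line_span2[OF assms(1)]] span2_subset_tau_iff assms by blast

lemma secant_in_switched:
  assumes "pg_line l" "l \<in> secants Q" "p \<notin> l"
  shows "l \<in> switched"
  using switched_iff[OF assms(1)] assms by blast

lemma square_tangent_at_p_in_switched:
  assumes "indep2 p w" "polar Q p w = 0" "nz_square (Q w)"
  shows "span2 p w \<in> switched"
proof -
  have line: "pg_line (span2 p w)" using pg_line_span2[OF assms(1)] .
  have in_tau: "span2 p w \<subseteq> tau" using span2_subset_tau_iff assms(2) polar_p_p by simp
  have "span2 p w \<in> T1_at Q (span1 p)"
    unfolding T1_at_def tangent_lines_def Star_def Line_def tangent_plane_p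
  proof (intro CollectI conjI IntI ballI impI)
    fix v assume v: "v \<in> span2 p w" "v \<notin> span1 p"
    from v(1) obtain a b where ab: "v = a *s p + b *s w" by (rule span2E)
    have "b \<noteq> 0" using v(2) ab span1_mem[of a p] by auto
    moreover have "Q v = b * b * Q w" using ab assms Q_p by (simp add: Q_lincomb)
    ultimately show "nz_square (Q v)" using assms(3) unfolding nz_square_def
      by (metis mult.assoc mult.left_commute no_zero_divisors)
  qed (use line in_tau span1_subset_span2_iff[of p p w] span2_left in auto)
  then have "span2 p w \<in> T1 Q"
    unfolding T1_def using span1_in_quadric[OF Q_p p_nonzero] by blast
  then show ?thesis using switched_iff[OF line] in_tau by blast
qed

subsection \<open>Lines through a point\<close>

lemma exists_polar_one: "e \<noteq> 0 \<Longrightarrow> \<exists>g. polar Q e g = 1"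
proof -
  assume "e \<noteq> 0"
  then obtain z where "polar Q e z \<noteq> 0" using exists_polar_nonzero by blast
  then have "polar Q e ((1 / polar Q e z) *s z) = 1" by (simp add: polar_scale_right)
  then show ?thesis by blast
qed

text \<open>\<open>\<langle>p, g\<rangle>\<^sup>\<perp>\<close> is a line missing the quadric, so it represents every nonzero value.\<close>

lemma perp_vector_with_value:
  assumes "polar Q g p \<noteq> 0" "t \<noteq> 0"
  obtains w where "polar Q p w = 0" "polar Q g w = 0" "Q w = t"
proof -
  obtain u v where uv: "indep2 u v" "polar Q p u = 0" "polar Q g u = 0" "polar Q p v = 0" "polar Q g v = 0"
    using independent_common_zeros_of_two_additive[OF additive_polar additive_polar] by blast
  have "anisotropic u v"
  proof (rule anisotropic_if_perp_p[OF uv(1,2,4)])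
    fix a b k assume "a *s u + b *s v = k *s p"
    moreover have "polar Q g (a *s u + b *s v) = 0" using uv by (simp add: polar_lincomb_right)
    ultimately show "k = 0" using assms(1) by (simp add: polar_scale_right)
  qed
  then obtain x y where "Q (x *s u + y *s v) = t" using anisotropic_represents assms(2) by blast
  then show ?thesis using that[of "x *s u + y *s v"] uv by (simp add: polar_lincomb_right)
qed

lemma nz_square_one: "nz_square (1::'a)"
  unfolding nz_square_def by (auto intro!: exI[of _ "1::'a"])

lemma line_through_p_in_switched: "\<exists>l\<in>Star (span1 p). l \<in> switched"
proof -
  obtain g where "polar Q p g = 1" using exists_polar_one[OF p_nonzero] by blast
  then have gp: "polar Q g p \<noteq> 0" by (simp add: polar_commute)
  then obtain w where w: "polar Q p w = 0" "polar Q g w = 0" "Q w = 1"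
    using perp_vector_with_value[OF gp one_neq_zero] by blast
  have "w \<noteq> 0" using w(3) by auto
  then have i: "indep2 p w" using indep2_commute[OF indep2_if_polar_separates[OF w(2) gp]] by blast
  have "span2 p w \<in> switched"
    using square_tangent_at_p_in_switched[OF i w(1)] w(3) nz_square_one by simp
  then show ?thesis using span2_in_Star[OF i span2_left] by blast
qed

lemma added_line_through_point:
  assumes "polar Q p x = 0" "\<nexists>c. x = c *s p"
  shows "\<exists>l\<in>Star (span1 x). l \<in> switched"
proof -
  have Qx: "Q x \<noteq> 0"
    using singular_perp_singular_proportional[OF Q_p p_nonzero _ assms(1)] assms(2) by blast
  obtain z where z: "polar Q p z \<noteq> 0" using exists_polar_nonzero[OF p_nonzero] by blast
  obtain g where g: "polar Q p g = 1" "polar Q x g = 0" "Q g = 0"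
    using hyperbolic_partner[OF lincomb_closed_UNIV _ _ _ Q_p z assms(1) Qx] by blast
  obtain h where h: "h \<noteq> 0" "polar Q p h = 0" "polar Q x h = 0" "polar Q g h = 0"
    using common_zero_of_three_additive[OF additive_polar additive_polar additive_polar] by force
  have "polar Q x x \<noteq> 0" using Qx two_nonzero by (simp add: polar_self)
  then have i: "indep2 x h" using indep2_commute[OF indep2_if_polar_separates[OF h(3) _ h(1)]] by blast
  have "p \<notin> span2 x h"
  proof
    assume "p \<in> span2 x h"
    then obtain a b where "p = a *s x + b *s h" by (rule span2E)
    then have "polar Q g p = a * polar Q g x + b * polar Q g h" by (simp add: polar_lincomb_right)
    then show False using g h(4) by (simp add: polar_commute)
  qed
  then have "span2 x h \<in> switched" using added_line_in_switched[OF i assms(1) h(2)] by blast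
  then show ?thesis using span2_in_Star[OF i span2_left] by blast
qed

lemma secant_through_singular_point_off_tau:
  assumes "polar Q p x \<noteq> 0" "Q x = 0"
  shows "\<exists>l\<in>Star (span1 x). l \<in> switched"
proof -
  have xp: "polar Q x p \<noteq> 0" using assms(1) by (simp add: polar_commute)
  obtain w where w: "polar Q p w = 0" "polar Q x w = 0" "Q w = 1"
    using perp_vector_with_value[OF xp one_neq_zero] by blast
  define c where "c = - 1 / polar Q x p"
  have c: "c * polar Q x p = - 1" unfolding c_def using xp by simp
  define r where "r = x + c *s p + w"
  have "Q (x + c *s p) = - 1" using assms(2) Q_p c by (simp add: Q_add Q_scale polar_scale_right)
  moreover have "polar Q (x + c *s p) w = 0" using w by (simp add: polar_add_left polar_scale_left)
  ultimately have Qr: "Q r = 0" unfolding r_def using w(3) by (simp add: Q_add)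
  have xr: "polar Q x r = - 1"
    unfolding r_def using assms(2) w(2) c by (simp add: polar_add_right polar_scale_right polar_self)
  have wr: "polar Q w r = 2"
    unfolding r_def using w by (simp add: polar_add_right polar_scale_right polar_self polar_commute)
  have x: "x \<noteq> 0" using assms(1) by auto
  have i: "indep2 x r"
    by (rule indep2_if_polar_separates[of w]) (use w(2) wr two_nonzero x in \<open>simp_all add: polar_commute\<close>)
  have "p \<notin> span2 x r"
  proof
    assume "p \<in> span2 x r"
    then obtain a b where ab: "p = a *s x + b *s r" by (rule span2E)
    then have "polar Q w p = a * polar Q w x + b * polar Q w r" by (simp add: polar_lincomb_right)
    then have "b = 0" using w wr two_nonzero by (simp add: polar_commute)
    then have "polar Q x p = a * polar Q x x" using ab by (simp add: polar_scale_right)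
    then show False using xp assms(2) by (simp add: polar_self)
  qed
  then have "span2 x r \<in> switched"
    using secant_in_switched[OF pg_line_span2[OF i] secant_span2_singular[OF i assms(2) Qr]] xr by simp
  then show ?thesis using span2_in_Star[OF i span2_left] by blast
qed

lemma secant_through_nonsingular_point_off_tau:
  assumes "polar Q p x \<noteq> 0" "Q x \<noteq> 0"
  shows "\<exists>l\<in>Star (span1 x). l \<in> switched"
proof -
  have xp: "polar Q x p \<noteq> 0" using assms(1) by (simp add: polar_commute)
  moreover have "- Q x \<noteq> 0" using assms(2) by simp
  ultimately obtain y where y: "polar Q p y = 0" "polar Q x y = 0" "Q y = - Q x"
    using perp_vector_with_value by blast
  have "y \<noteq> 0" using y(3) assms(2) by auto
  moreover have "polar Q x x \<noteq> 0" using assms(2) two_nonzero by (simp add: polar_self)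
  ultimately have i: "indep2 x y" using indep2_commute[OF indep2_if_polar_separates[OF y(2)]] by blast
  have "p \<notin> span2 x y"
  proof
    assume "p \<in> span2 x y"
    then obtain a b where ab: "p = a *s x + b *s y" by (rule span2E)
    then have "polar Q p p = a * polar Q p x + b * polar Q p y" by (simp add: polar_lincomb_right)
    then have "a = 0" using polar_p_p y(1) assms(1) by simp
    then have "polar Q x p = b * polar Q x y" using ab by (simp add: polar_scale_right)
    then show False using xp y(2) by simp
  qed
  then have "span2 x y \<in> switched"
    using secant_in_switched[OF pg_line_span2[OF i] secant_span2_opposite[OF i y(3) y(2) assms(2)]] by simp
  then show ?thesis using span2_in_Star[OF i span2_left] by blast
qed

lemma passant_through_point:
  assumes "polar Q p x = 0" "\<nexists>c. x = c *s p"
  shows "\<exists>l\<in>Star (span1 x). l \<notin> switched"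
proof -
  have x: "x \<noteq> 0" using assms(2) by (metis vector_smult_lzero)
  have Qx: "Q x \<noteq> 0"
    using singular_perp_singular_proportional[OF Q_p p_nonzero _ assms(1)] assms(2) by blast
  obtain z where z: "polar Q p z \<noteq> 0" using exists_polar_nonzero[OF p_nonzero] by blast
  obtain g where g: "polar Q p g = 1" "polar Q x g = 0" "Q g = 0"
    using hyperbolic_partner[OF lincomb_closed_UNIV _ _ _ Q_p z assms(1) Qx] by blast
  obtain n :: 'a where n: "nonsquare n" using exists_nonsquare[OF odd_card] by blast
  define y where "y = (- (n * Q x)) *s p + g"
  have py: "polar Q p y = 1" and xy: "polar Q x y = 0" and Qy: "Q y = - (n * Q x)"
    unfolding y_def using g assms(1) Q_p polar_p_p by (simp_all add: quadratic_simps)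
  have i: "indep2 x y" using indep2_if_polar_separates[OF assms(1) _ x] py by simp
  have "span2 x y \<notin> switched"
    using passant_notin_switched[OF pg_line_span2[OF i] passant_if_nonsquare_ratio[OF xy Qx Qy n]]
      not_subset_tau[OF span2_right] py by simp
  then show ?thesis using span2_in_Star[OF i span2_left] by blast
qed

lemma line_through_point_in_switched:
  assumes "x \<noteq> 0"
  shows "\<exists>l\<in>Star (span1 x). l \<in> switched"
proof (cases "polar Q p x = 0")
  case True
  show ?thesis
  proof (cases "\<exists>c. x = c *s p")
    case True
    then obtain c where "x = c *s p" "c \<noteq> 0" using assms by auto
    then show ?thesis using line_through_p_in_switched by (simp add: span1_scale)
  qed (use True added_line_through_point in blast)
next
  case False
  then show ?thesis
    using secant_through_singular_point_off_tau secant_through_nonsingular_point_off_tau by blast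
qed

lemma line_through_point_notin_switched:
  assumes "x \<noteq> 0"
  shows "\<exists>l\<in>Star (span1 x). l \<notin> switched"
proof (cases "polar Q p x = 0 \<and> (\<nexists>c. x = c *s p)")
  case True
  then show ?thesis using passant_through_point by blast
next
  case False
  obtain z where z: "polar Q p z \<noteq> 0" "x \<in> span2 p z"
  proof (cases "polar Q p x = 0")
    case True
    with False obtain c where "x = c *s p" by blast
    moreover obtain z where "polar Q p z \<noteq> 0" using exists_polar_nonzero[OF p_nonzero] by blast
    ultimately show ?thesis using that span2_mem[of c p 0 z] by simp
  qed (use that span2_right in blast)
  have i: "indep2 p z" by (rule indep2_if_polar_separates[OF polar_p_p z(1) p_nonzero])
  have "span2 p z \<notin> switched"
    by (rule removed_line_notin_switched[OF pg_line_span2[OF i] span2_left span2_right z(1)])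
  then show ?thesis using span2_in_Star[OF i z(2)] by blast
qed

subsection \<open>Lines in a plane\<close>

lemma plane_has_singular_point:
  assumes "indep3 u v w"
  obtains e where "e \<in> span3 u v w" "e \<noteq> 0" "Q e = 0"
proof -
  let ?S = "span3 u v w"
  have S: "lincomb_closed ?S" by (rule lincomb_closed_span3)
  have uv: "u \<in> ?S" "v \<in> ?S" "indep2 u v" using span3_generators indep3_imp_indep2[OF assms] by auto
  show ?thesis
  proof (cases "anisotropic u v")
    case False
    then obtain a b where ab: "Q (a *s u + b *s v) = 0" "a \<noteq> 0 \<or> b \<noteq> 0"
      unfolding anisotropic_def by blast
    moreover have "a *s u + b *s v \<noteq> 0" using uv(3) ab(2) unfolding indep2_def by blast
    ultimately show ?thesis using that lincomb_closedD[OF S uv(1,2)] by blast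
  next
    case True
    obtain w' where w': "w' \<in> ?S" "w' \<noteq> 0" "polar Q u w' = 0" "polar Q v w' = 0"
      using common_zero_of_two_additive_in_plane[OF assms additive_polar additive_polar] by blast
    show ?thesis
    proof (cases "Q w' = 0")
      case False
      then have "- Q w' \<noteq> 0" by simp
      then obtain s t where st: "Q (s *s u + t *s v) = - Q w'" using anisotropic_represents[OF True] by blast
      define v' where "v' = s *s u + t *s v"
      have "polar Q v' w' = 0" unfolding v'_def using w' by (simp add: polar_lincomb_left)
      then have "Q (v' + w') = 0" using st by (simp add: Q_add v'_def)
      moreover have "v' + w' \<noteq> 0"
      proof
        assume "v' + w' = 0"
        then have "v' = (- 1) *s w'" by (simp add: vec_eq_iff add_eq_0_iff)
        then have "Q v' = (- 1) * (- 1) * Q w'" by (simp only: Q_scale)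
        then have "Q w' = - Q w'" using st unfolding v'_def by simp
        then have "2 * Q w' = 0" by (metis eq_neg_iff_add_eq_0 mult_2)
        then show False using False two_nonzero by simp
      qed
      moreover have "v' + w' \<in> ?S"
        unfolding v'_def by (rule lincomb_closed_add[OF S lincomb_closedD[OF S uv(1,2)] w'(1)])
      ultimately show ?thesis using that by blast
    qed (use that w' in blast)
  qed
qed

lemma nonsingular_perp_in_plane:
  assumes "indep3 u v w" "e \<in> span3 u v w" "e \<noteq> 0" "Q e = 0"
  obtains f where "f \<in> span3 u v w" "polar Q e f = 0" "Q f \<noteq> 0"
proof -
  obtain x y where xy: "x \<in> span3 u v w" "y \<in> span3 u v w" "indep2 x y" "polar Q e x = 0" "polar Q e y = 0"
    using independent_zeros_of_additive_in_plane[OF assms(1) additive_polar] by blast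
  then obtain f where f: "f \<in> span3 u v w" "polar Q e f = 0" "\<nexists>c. f = c *s e"
    using indep2_not_both_proportional by metis
  then have "Q f \<noteq> 0" using singular_perp_singular_proportional[OF assms(4,3)] by blast
  then show ?thesis using that f by blast
qed

text \<open>Let \<open>g\<close> be a hyperbolic partner of \<open>p\<close> in the plane, orthogonal to \<open>f\<close>; then
  \<open>\<langle>f, p - Q(f) g\<rangle>\<close> is a secant avoiding \<open>P\<^sub>1\<close>.\<close>

lemma secant_in_plane_through_p:
  assumes "indep3 u v w" "p \<in> span3 u v w" "z \<in> span3 u v w" "polar Q p z \<noteq> 0"
  shows "\<exists>l\<in>Line (span3 u v w). l \<in> switched"
proof -
  let ?S = "span3 u v w"
  have S: "lincomb_closed ?S" by (rule lincomb_closed_span3)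
  obtain f where f: "f \<in> ?S" "polar Q p f = 0" "Q f \<noteq> 0"
    using nonsingular_perp_in_plane[OF assms(1,2) p_nonzero Q_p] by blast
  obtain g where g: "g \<in> ?S" "polar Q p g = 1" "polar Q f g = 0" "Q g = 0"
    using hyperbolic_partner[OF S assms(2,3) f(1) Q_p assms(4) f(2,3)] by blast
  define y where "y = p - Q f *s g"
  have y: "y \<in> ?S" unfolding y_def by (rule lincomb_closed_diff[OF S assms(2) lincomb_closed_scale[OF S g(1)]])
  have Qy: "Q y = - Q f" and fy: "polar Q f y = 0" and py: "polar Q p y = - Q f" and gy: "polar Q g y = 1"
    unfolding y_def using g f(2) Q_p polar_p_p
    by (simp_all add: Q_diff Q_scale polar_diff_right polar_diff_left polar_scale_right polar_scale_left
        polar_self polar_commute)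
  have f0: "f \<noteq> 0" using f(3) by auto
  have i: "indep2 f y" using indep2_if_polar_separates[OF f(2) _ f0] py f(3) by simp
  have "p \<notin> span2 f y"
  proof
    assume "p \<in> span2 f y"
    then obtain a b where ab: "p = a *s f + b *s y" by (rule span2E)
    have "polar Q g p = a * polar Q g f + b * polar Q g y" unfolding ab by (rule polar_lincomb_right)
    then have b: "b = 1" using g(2,3) gy by (simp add: polar_commute)
    have "polar Q f p = a * polar Q f f + b * polar Q f y" unfolding ab by (rule polar_lincomb_right)
    then have "a = 0" using f(2,3) fy two_nonzero by (simp add: polar_commute polar_self)
    then have "Q f *s g = 0" using ab b unfolding y_def by (simp add: vec_eq_iff)
    then show False using f(3) g(2) by simp
  qed
  then have "span2 f y \<in> switched"
    using secant_in_switched[OF pg_line_span2[OF i] secant_span2_opposite[OF i Qy fy f(3)]] by simp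
  then show ?thesis using span2_in_Line[OF i lincomb_closed_span2[OF S f(1) y]] by blast
qed

lemma tangent_plane_at_p_lines:
  assumes "indep3 u v w" "p \<in> span3 u v w" "\<forall>z\<in>span3 u v w. polar Q p z = 0"
  shows "(\<exists>l\<in>Line (span3 u v w). l \<in> switched) \<and> (\<exists>l\<in>Line (span3 u v w). l \<notin> switched)"
proof -
  let ?S = "span3 u v w"
  have S: "lincomb_closed ?S" by (rule lincomb_closed_span3)
  obtain g where "polar Q p g = 1" using exists_polar_one[OF p_nonzero] by blast
  then have gp: "polar Q g p = 1" by (simp add: polar_commute)
  obtain x y where xy: "x \<in> ?S" "y \<in> ?S" "indep2 x y" "polar Q g x = 0" "polar Q g y = 0"
    using independent_zeros_of_additive_in_plane[OF assms(1) additive_polar] by blast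
  have px: "polar Q p x = 0" "polar Q p y = 0" using assms(3) xy by auto
  have "p \<notin> span2 x y"
  proof
    assume "p \<in> span2 x y"
    then obtain a b where "p = a *s x + b *s y" by (rule span2E)
    then show False using xy gp by (simp add: polar_lincomb_right)
  qed
  then have "span2 x y \<in> switched" by (rule added_line_in_switched[OF xy(3) px])
  moreover have "anisotropic x y"
  proof (rule anisotropic_if_perp_p[OF xy(3) px])
    fix a b k assume "a *s x + b *s y = k *s p"
    moreover have "polar Q g (a *s x + b *s y) = 0" using xy by (simp add: polar_lincomb_right)
    ultimately show "k = 0" using gp by (simp add: polar_scale_right)
  qed
  obtain n :: 'a where n: "nonsquare n" using exists_nonsquare[OF odd_card] by blast
  obtain s t where st: "Q (s *s x + t *s y) = n"
    using anisotropic_represents[OF \<open>anisotropic x y\<close> nonsquare_nonzero[OF n]] by blast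
  define w' where "w' = s *s x + t *s y"
  have w': "Q w' = n" "polar Q p w' = 0" "polar Q g w' = 0" "w' \<in> ?S"
    using st xy px lincomb_closedD[OF S xy(1,2)] unfolding w'_def by (auto simp: polar_lincomb_right)
  have "w' \<noteq> 0" using w'(1) nonsquare_nonzero[OF n] by auto
  then have i: "indep2 p w'" using indep2_commute[OF indep2_if_polar_separates[OF w'(3)]] gp by simp
  have "span2 p w' \<notin> switched"
    using nonsquare_tangent_notin_switched[OF i Q_p w'(2)] w'(1) n span2_left[of p w'] by simp
  ultimately show ?thesis
    using span2_in_Line[OF xy(3) lincomb_closed_span2[OF S xy(1,2)]]
      span2_in_Line[OF i lincomb_closed_span2[OF S assms(2) w'(4)]] by blast
qed

lemma anisotropic_pair_in_plane_avoiding_p: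
  assumes "indep3 u v w" "p \<notin> span3 u v w"
  obtains x y where "x \<in> span3 u v w" "y \<in> span3 u v w" "indep2 x y"
    "polar Q p x = 0" "polar Q p y = 0" "anisotropic x y"
proof -
  let ?S = "span3 u v w"
  have S: "lincomb_closed ?S" by (rule lincomb_closed_span3)
  obtain x y where xy: "x \<in> ?S" "y \<in> ?S" "indep2 x y" "polar Q p x = 0" "polar Q p y = 0"
    using independent_zeros_of_additive_in_plane[OF assms(1) additive_polar] by blast
  have "anisotropic x y"
  proof (rule anisotropic_if_perp_p[OF xy(3-5)])
    fix a b k assume h: "a *s x + b *s y = k *s p"
    show "k = 0"
    proof (rule ccontr)
      assume "k \<noteq> 0"
      have "(1 / k) *s (a *s x + b *s y) \<in> ?S" using lincomb_closedD[OF S xy(1,2)] lincomb_closed_scale[OF S] by blast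
      then show False using h \<open>k \<noteq> 0\<close> assms(2) by (simp add: vector_smult_assoc)
    qed
  qed
  then show ?thesis using that xy by blast
qed

lemma line_in_plane_avoiding_p_in_switched:
  assumes "indep3 u v w" "p \<notin> span3 u v w"
  shows "\<exists>l\<in>Line (span3 u v w). l \<in> switched"
proof -
  obtain x y where xy: "x \<in> span3 u v w" "y \<in> span3 u v w" "indep2 x y" "polar Q p x = 0" "polar Q p y = 0"
    using anisotropic_pair_in_plane_avoiding_p[OF assms] by metis
  have sub: "span2 x y \<subseteq> span3 u v w" by (rule lincomb_closed_span2[OF lincomb_closed_span3 xy(1,2)])
  then have "span2 x y \<in> switched" using added_line_in_switched[OF xy(3-5)] assms(2) by blast
  then show ?thesis using span2_in_Line[OF xy(3) sub] by blast
qed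

lemma nonsquare_tangent_in_plane:
  assumes "indep3 u v w" "p \<notin> span3 u v w" "e \<in> span3 u v w" "Q e = 0" "polar Q p e \<noteq> 0"
    and "\<forall>z\<in>span3 u v w. polar Q e z = 0"
  shows "\<exists>l\<in>Line (span3 u v w). l \<notin> switched"
proof -
  let ?S = "span3 u v w"
  have S: "lincomb_closed ?S" by (rule lincomb_closed_span3)
  obtain x y where xy: "x \<in> ?S" "y \<in> ?S" "polar Q p x = 0" "polar Q p y = 0" "anisotropic x y"
    using anisotropic_pair_in_plane_avoiding_p[OF assms(1,2)] by metis
  obtain n :: 'a where n: "nonsquare n" using exists_nonsquare[OF odd_card] by blast
  obtain s t where st: "Q (s *s x + t *s y) = n"
    using anisotropic_represents[OF xy(5) nonsquare_nonzero[OF n]] by blast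
  define w' where "w' = s *s x + t *s y"
  have w': "Q w' = n" "polar Q p w' = 0" "w' \<in> ?S"
    using st xy lincomb_closedD[OF S xy(1,2)] unfolding w'_def by (auto simp: polar_lincomb_right)
  have "w' \<noteq> 0" using w'(1) nonsquare_nonzero[OF n] by auto
  then have i: "indep2 e w'" using indep2_commute[OF indep2_if_polar_separates[OF w'(2) assms(5)]] by blast
  have "span2 e w' \<notin> switched"
    using nonsquare_tangent_notin_switched[OF i assms(4)] assms(6) w' n not_subset_tau[OF span2_left assms(5)]
    by simp
  then show ?thesis using span2_in_Line[OF i lincomb_closed_span2[OF S assms(3) w'(3)]] by blast
qed

text \<open>With \<open>g\<close> a hyperbolic partner of \<open>e\<close> orthogonal to \<open>f\<close> and \<open>n\<close> a non-square,
  \<open>Q(a f + b (e - n Q(f) g)) = Q(f) (a\<^sup>2 - n b\<^sup>2)\<close>.\<close>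

lemma passant_in_plane:
  assumes "indep3 u v w" "e \<in> span3 u v w" "e \<noteq> 0" "Q e = 0" "polar Q p e \<noteq> 0"
    and "z \<in> span3 u v w" "polar Q e z \<noteq> 0"
  shows "\<exists>l\<in>Line (span3 u v w). l \<notin> switched"
proof -
  let ?S = "span3 u v w"
  have S: "lincomb_closed ?S" by (rule lincomb_closed_span3)
  obtain f0 where f0: "f0 \<in> ?S" "polar Q e f0 = 0" "Q f0 \<noteq> 0"
    using nonsingular_perp_in_plane[OF assms(1-4)] by blast
  obtain f where f: "f \<in> ?S" "polar Q e f = 0" "Q f \<noteq> 0" "polar Q p f \<noteq> 0"
  proof (cases "polar Q p f0 = 0")
    case True
    have "polar Q e (f0 + e) = 0" "Q (f0 + e) = Q f0" "polar Q p (f0 + e) \<noteq> 0"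
      using f0(2) assms(4,5) True by (simp_all add: Q_add polar_add_right polar_self polar_commute)
    then show ?thesis using that[of "f0 + e"] lincomb_closed_add[OF S f0(1) assms(2)] f0(3) by auto
  qed (use that f0 in blast)
  obtain g where g: "g \<in> ?S" "polar Q e g = 1" "polar Q f g = 0" "Q g = 0"
    using hyperbolic_partner[OF S assms(2,6) f(1) assms(4,7) f(2,3)] by blast
  obtain n :: 'a where n: "nonsquare n" using exists_nonsquare[OF odd_card] by blast
  define c where "c = - (n * Q f)"
  have "c \<noteq> 0" unfolding c_def using nonsquare_nonzero[OF n] f(3) by simp
  define y where "y = e + c *s g"
  have y: "y \<in> ?S" unfolding y_def by (rule lincomb_closed_add[OF S assms(2) lincomb_closed_scale[OF S g(1)]])
  have Qy: "Q y = c" and fy: "polar Q f y = 0" and ey: "polar Q e y = c"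
    unfolding y_def using g assms(4) f(2)
    by (simp_all add: Q_add Q_scale polar_add_right polar_scale_right polar_self polar_commute)
  have "f \<noteq> 0" using f(3) by auto
  then have i: "indep2 f y" using indep2_if_polar_separates[OF f(2)] ey \<open>c \<noteq> 0\<close> by simp
  have "span2 f y \<notin> switched"
    by (rule passant_notin_switched[OF pg_line_span2[OF i] passant_if_nonsquare_ratio[OF fy f(3) Qy[unfolded c_def] n]
          not_subset_tau[OF span2_left f(4)]])
  then show ?thesis using span2_in_Line[OF i lincomb_closed_span2[OF S f(1) y]] by blast
qed

lemma line_in_plane_avoiding_p_notin_switched:
  assumes "indep3 u v w" "p \<notin> span3 u v w"
  shows "\<exists>l\<in>Line (span3 u v w). l \<notin> switched"
proof -
  obtain e where e: "e \<in> span3 u v w" "e \<noteq> 0" "Q e = 0" using plane_has_singular_point[OF assms(1)] .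
  have "polar Q p e \<noteq> 0"
  proof
    assume "polar Q p e = 0"
    then obtain k where "e = k *s p" using singular_perp_singular_proportional[OF Q_p p_nonzero e(3)] by blast
    moreover have "k \<noteq> 0" using calculation e(2) by auto
    ultimately have "p = (1 / k) *s e" by (simp add: vector_smult_assoc)
    then show False using assms(2) lincomb_closed_scale[OF lincomb_closed_span3 e(1)] by metis
  qed
  then show ?thesis
    using nonsquare_tangent_in_plane[OF assms e(1,3)] passant_in_plane[OF assms(1) e] by blast
qed

lemma plane_has_line_in_switched:
  assumes "indep3 u v w"
  shows "\<exists>l\<in>Line (span3 u v w). l \<in> switched"
  using assms tangent_plane_at_p_lines secant_in_plane_through_p line_in_plane_avoiding_p_in_switched
  by blast

lemma plane_has_line_notin_switched:
  assumes "indep3 u v w"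
  shows "\<exists>l\<in>Line (span3 u v w). l \<notin> switched"
proof (cases "p \<in> span3 u v w")
  case True
  show ?thesis
  proof (cases "\<forall>z\<in>span3 u v w. polar Q p z = 0")
    case False
    then obtain z where z: "z \<in> span3 u v w" "polar Q p z \<noteq> 0" by blast
    have i: "indep2 p z" by (rule indep2_if_polar_separates[OF polar_p_p z(2) p_nonzero])
    have "span2 p z \<notin> switched"
      by (rule removed_line_notin_switched[OF pg_line_span2[OF i] span2_left span2_right z(2)])
    then show ?thesis using span2_in_Line[OF i lincomb_closed_span2[OF lincomb_closed_span3 True z(1)]] by blast
  qed (use assms True tangent_plane_at_p_lines in blast)
qed (use assms line_in_plane_avoiding_p_notin_switched in blast)

end

theorem mainTheorem8:
  fixes Q :: "('a::{finite,field}) ^ 4 \<Rightarrow> 'a" and P1 :: "('a ^ 4) set"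
  assumes "odd CARD('a)"
    and "elliptic_form Q"
    and "P1 \<in> quadric_points Q"
  shows "(\<forall>\<pi>. pg_plane \<pi> \<longrightarrow>
            \<not> (Line \<pi> \<subseteq> switched_class Q P1) \<and> Line \<pi> \<inter> switched_class Q P1 \<noteq> {}) \<and>
         (\<forall>P. pg_point P \<longrightarrow>
            \<not> (Star P \<subseteq> switched_class Q P1) \<and> Star P \<inter> switched_class Q P1 \<noteq> {})"
proof -
  obtain p where p: "p \<noteq> 0" "P1 = span1 p"
    using assms(3) unfolding quadric_points_def pg_point_def by blast
  then have "Q p = 0" using assms(3) span1_self unfolding quadric_points_def by blast
  then interpret switched_elliptic Q p using assms(1,2) p(1) by unfold_locales
  have "switched_class Q P1 = switched" unfolding switched_def p(2) ..
  then show ?thesis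
    unfolding pg_plane_def pg_point_def
    using plane_has_line_in_switched plane_has_line_notin_switched
      line_through_point_in_switched line_through_point_notin_switched
    by blast
qed

end
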